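(* Let $C_6$ be the set of $6$-cycles in $S_6$ and $C_{24}^0$ the set of permutations of $\{1,\dots,6\}$ of the form $(1\,x_2)(x_3\,x_4\,x_5\,x_6)$ with $\{x_2,\dots,x_6\}=\{2,\dots,6\}$. For $\sigma=(1\,x_2)(x_3\,x_4\,x_5\,x_6)\in C_{24}^0$ define $$f(\sigma)=\{\sigma,\ (1\,x_3\,x_2\,x_5\,x_4\,x_6),\ (1\,x_4\,x_2\,x_6\,x_5\,x_3),\ (1\,x_5\,x_2\,x_3\,x_6\,x_4),\ (1\,x_6\,x_2\,x_4\,x_3\,x_5)\}$$ (this is well defined, i.e., independent of the cyclic representation of the $4$-cycle). Then for each $\sigma\in C_{24}^0$ the permutation matrices of the five elements of $f(\sigma)$ sum to $J_6-I_6$ (i.e., for every $i\ne j$ exactly one element of $f(\sigma)$ maps $i$ to $j$), and the sets $f(\sigma)$, $\sigma\in C_{24}^0$, are pairwise disjoint with union $C_{24}^0\cup C_6$. Hence $\{f(\sigma):\sigma\in C_{24}^0\}$ is a partition of $C_{24}^0\cup C_6$ into $30$ subsets, each a $1$-factorization of $L_{6,1}$.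
   Context: Permutations are written in cycle notation; the permutation matrix of $\pi$ has a $1$ in position $(i,\pi(i))$. $J_6$ is the $6\times6$ all-ones matrix and $I_6$ the identity. $L_{6,1}=K_{6,6}-6K_{1,1}$ has biadjacency matrix $J_6-I_6$; a $1$-factorization of it is a set of derangement permutation matrices summing to $J_6-I_6$. *)

theory Defs
  imports "HOL-Combinatorics.Cycles"
begin

text \<open>Permutations of {1..6} are functions nat => nat; the cycle (a1 a2 ... ak)
  is cycle_of_list [a1,...,ak], mapping a1 to a2, ..., ak to a1.\<close>

definition C6 :: "(nat \<Rightarrow> nat) set" where
  "C6 = {cycle_of_list cs | cs. distinct cs \<and> set cs = {1..6::nat}}"

definition rep :: "nat \<Rightarrow> nat \<Rightarrow> nat \<Rightarrow> nat \<Rightarrow> nat \<Rightarrow> bool" where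
  "rep x2 x3 x4 x5 x6 \<longleftrightarrow> distinct [x2,x3,x4,x5,x6] \<and> set [x2,x3,x4,x5,x6] = {2..6}"

definition sig :: "nat \<Rightarrow> nat \<Rightarrow> nat \<Rightarrow> nat \<Rightarrow> nat \<Rightarrow> nat \<Rightarrow> nat" where
  "sig x2 x3 x4 x5 x6 = cycle_of_list [1,x2] \<circ> cycle_of_list [x3,x4,x5,x6]"

definition C24_0 :: "(nat \<Rightarrow> nat) set" where
  "C24_0 = {sig x2 x3 x4 x5 x6 | x2 x3 x4 x5 x6. rep x2 x3 x4 x5 x6}"

definition fset :: "nat \<Rightarrow> nat \<Rightarrow> nat \<Rightarrow> nat \<Rightarrow> nat \<Rightarrow> (nat \<Rightarrow> nat) set" where
  "fset x2 x3 x4 x5 x6 =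
     {sig x2 x3 x4 x5 x6,
      cycle_of_list [1,x3,x2,x5,x4,x6],
      cycle_of_list [1,x4,x2,x6,x5,x3],
      cycle_of_list [1,x5,x2,x3,x6,x4],
      cycle_of_list [1,x6,x2,x4,x3,x5]}"

end

theory Submission
  imports Defs "HOL-Combinatorics.Multiset_Permutations"
begin

(* Writing a = \<sigma> 1, the four 6-cycles of f(\<sigma>) are (1 x a \<sigma>\<^sup>2x \<sigma>x \<sigma>\<^sup>3x) for the four x \<noteq> a in {2..6},
   so f(\<sigma>) depends on \<sigma> alone. Conversely \<sigma> can be read off from any element p of f(\<sigma>): either
   p (p 1) = 1 and p = \<sigma>, or p is such a 6-cycle and the orbit of 1 under p lists 1, x, a, \<sigma>\<^sup>2x, \<sigma>x, \<sigma>\<^sup>3x.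
   Hence the sets f(\<sigma>) are pairwise disjoint, and since every 6-cycle can be rotated to start at 1,
   they cover C6. The one-factorization property and |C24\<^sup>0| = 30 are finite checks. *)

lemma map_cycle_of_list: "distinct cs \<Longrightarrow> map (cycle_of_list cs) cs = rotate1 cs"
  using cyclic_rotation[of cs 1] by simp

lemma cycle_of_list_4_apply:
  assumes "distinct [u1, u2, u3, u4]"
  shows "cycle_of_list [u1, u2, u3, u4] u1 = u2" "cycle_of_list [u1, u2, u3, u4] u2 = u3"
    "cycle_of_list [u1, u2, u3, u4] u3 = u4" "cycle_of_list [u1, u2, u3, u4] u4 = u1"
  using map_cycle_of_list[OF assms] by (simp_all del: cycle_of_list.simps)

lemma cycle_of_list_6_apply:
  assumes "distinct [u1, u2, u3, u4, u5, u6]"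
  shows "cycle_of_list [u1, u2, u3, u4, u5, u6] u1 = u2" "cycle_of_list [u1, u2, u3, u4, u5, u6] u2 = u3"
    "cycle_of_list [u1, u2, u3, u4, u5, u6] u3 = u4" "cycle_of_list [u1, u2, u3, u4, u5, u6] u4 = u5"
    "cycle_of_list [u1, u2, u3, u4, u5, u6] u5 = u6" "cycle_of_list [u1, u2, u3, u4, u5, u6] u6 = u1"
  using map_cycle_of_list[OF assms] by (simp_all del: cycle_of_list.simps)

lemma permutes_eqI:
  assumes "p permutes S" "q permutes S" "\<And>x. x \<in> S \<Longrightarrow> p x = q x"
  shows "p = q"
  using assms by (metis ext permutes_not_in)

lemma cycle_of_list_rotate_to_head:
  assumes "distinct cs" "x \<in> set cs"
  obtains ys where "cycle_of_list cs = cycle_of_list (x # ys)" "distinct (x # ys)" "set (x # ys) = set cs"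
proof -
  obtain i where i: "i < length cs" "cs ! i = x"
    using assms(2) by (meson in_set_conv_nth)
  then have "cs \<noteq> []" by auto
  then have "rotate i cs \<noteq> []" "hd (rotate i cs) = x"
    using i by (simp_all add: hd_rotate_conv_nth)
  then have "rotate i cs = x # tl (rotate i cs)"
    by (metis list.collapse)
  then show ?thesis
    using that[of "tl (rotate i cs)"] cycle_of_list_rotate_independent[OF assms(1), of i] assms(1)
    by (metis distinct_rotate set_rotate)
qed

declare cycle_of_list.simps [simp del]

context
  fixes a b c d e :: nat
  assumes rep: "rep a b c d e"
begin

lemma rep_distinct: "distinct [1, a, b, c, d, e]"
  using rep unfolding rep_def by force

lemma rep_neq:
  "1 \<noteq> a" "1 \<noteq> b" "1 \<noteq> c" "1 \<noteq> d" "1 \<noteq> e" "a \<noteq> b" "a \<noteq> c" "a \<noteq> d" "a \<noteq> e"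
  "b \<noteq> c" "b \<noteq> d" "b \<noteq> e" "c \<noteq> d" "c \<noteq> e" "d \<noteq> e"
  using rep_distinct by auto

lemma rep_set: "{1..6} = {1, a, b, c, d, e}"
proof -
  have "{1..6::nat} = insert 1 {2..6}" by auto
  then show ?thesis using rep unfolding rep_def by simp
qed

lemma rep_rotate: "rep a c d e b"
  using rep unfolding rep_def by (auto simp: insert_commute)

lemma sig_apply:
  "sig a b c d e 1 = a" "sig a b c d e a = 1" "sig a b c d e b = c"
  "sig a b c d e c = d" "sig a b c d e d = e" "sig a b c d e e = b"
  using rep_distinct cycle_of_list_4_apply[of b c d e]
  by (auto simp: sig_def id_outside_supp cycle_of_list.simps)

lemma sig_permutes: "sig a b c d e permutes {1..6}"
  unfolding sig_def rep_set
  by (intro permutes_compose permutes_subset[OF cycle_permutes]) auto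

lemma hexacycles_distinct:
  "distinct [1, b, a, d, c, e]" "distinct [1, c, a, e, d, b]"
  "distinct [1, d, a, b, e, c]" "distinct [1, e, a, c, b, d]"
  using rep_distinct by auto

lemma hexacycles_apply:
  "cycle_of_list [1, b, a, d, c, e] 1 = b" "cycle_of_list [1, b, a, d, c, e] b = a"
  "cycle_of_list [1, b, a, d, c, e] a = d" "cycle_of_list [1, b, a, d, c, e] d = c"
  "cycle_of_list [1, b, a, d, c, e] c = e" "cycle_of_list [1, b, a, d, c, e] e = 1"
  "cycle_of_list [1, c, a, e, d, b] 1 = c" "cycle_of_list [1, c, a, e, d, b] c = a"
  "cycle_of_list [1, c, a, e, d, b] a = e" "cycle_of_list [1, c, a, e, d, b] e = d"
  "cycle_of_list [1, c, a, e, d, b] d = b" "cycle_of_list [1, c, a, e, d, b] b = 1"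
  "cycle_of_list [1, d, a, b, e, c] 1 = d" "cycle_of_list [1, d, a, b, e, c] d = a"
  "cycle_of_list [1, d, a, b, e, c] a = b" "cycle_of_list [1, d, a, b, e, c] b = e"
  "cycle_of_list [1, d, a, b, e, c] e = c" "cycle_of_list [1, d, a, b, e, c] c = 1"
  "cycle_of_list [1, e, a, c, b, d] 1 = e" "cycle_of_list [1, e, a, c, b, d] e = a"
  "cycle_of_list [1, e, a, c, b, d] a = c" "cycle_of_list [1, e, a, c, b, d] c = b"
  "cycle_of_list [1, e, a, c, b, d] b = d" "cycle_of_list [1, e, a, c, b, d] d = 1"
  using cycle_of_list_6_apply[OF hexacycles_distinct(1)] cycle_of_list_6_apply[OF hexacycles_distinct(2)]
    cycle_of_list_6_apply[OF hexacycles_distinct(3)] cycle_of_list_6_apply[OF hexacycles_distinct(4)]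
  by simp_all

end

(* The simplifier rewrites 1 :: nat to Suc 0, so the evaluation facts are stated in that form. *)
lemmas rep_eval = sig_apply[unfolded One_nat_def] hexacycles_apply[unfolded One_nat_def]
  rep_neq[unfolded One_nat_def] rep_neq[THEN not_sym, unfolded One_nat_def]

lemma sig_in_C24_0: "rep a b c d e \<Longrightarrow> sig a b c d e \<in> C24_0"
  unfolding C24_0_def by blast

lemma sig_rotate: "rep a b c d e \<Longrightarrow> sig a b c d e = sig a c d e b"
  using sig_apply sig_apply[OF rep_rotate] rep_set
  by (intro permutes_eqI[OF sig_permutes sig_permutes[OF rep_rotate]]) auto

definition fset_list :: "nat \<Rightarrow> nat \<Rightarrow> nat \<Rightarrow> nat \<Rightarrow> nat \<Rightarrow> (nat \<Rightarrow> nat) list" where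
  "fset_list a b c d e = [sig a b c d e, cycle_of_list [1, b, a, d, c, e],
     cycle_of_list [1, c, a, e, d, b], cycle_of_list [1, d, a, b, e, c], cycle_of_list [1, e, a, c, b, d]]"

lemma set_fset_list: "set (fset_list a b c d e) = fset a b c d e"
  by (simp add: fset_list_def fset_def)

lemma distinct_fset_list:
  assumes rep: "rep a b c d e"
  shows "distinct (fset_list a b c d e)"
proof -
  have "distinct (map (\<lambda>p. p 1) (fset_list a b c d e))"
    by (simp add: fset_list_def rep_eval[OF rep])
  then show ?thesis by (simp only: distinct_map)
qed

lemma card_fset: "rep a b c d e \<Longrightarrow> card (fset a b c d e) = 5"
  by (simp add: set_fset_list[symmetric] distinct_card distinct_fset_list) (simp add: fset_list_def)

lemma card_fset_apply_eq:
  assumes rep: "rep a b c d e" and ij: "i \<in> {1..6}" "j \<in> {1..6}"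
  shows "card {p \<in> fset a b c d e. p i = j} = (if i = j then 0 else 1)"
proof -
  have "card {p \<in> fset a b c d e. p i = j} = length (filter (\<lambda>p. p i = j) (fset_list a b c d e))"
    using distinct_card[OF distinct_filter[OF distinct_fset_list[OF rep]]]
    by (simp add: set_fset_list[symmetric])
  moreover have "i \<in> {1, a, b, c, d, e}" "j \<in> {1, a, b, c, d, e}"
    using ij by (simp_all only: rep_set[OF rep])
  ultimately show ?thesis
    unfolding insert_iff singleton_iff
    by (elim disjE) (simp_all add: fset_list_def rep_eval[OF rep])
qed

definition hexacycle :: "(nat \<Rightarrow> nat) \<Rightarrow> nat \<Rightarrow> nat \<Rightarrow> nat" where
  "hexacycle s x = cycle_of_list [1, x, s 1, s (s x), s x, s (s (s x))]"

definition factorization :: "(nat \<Rightarrow> nat) \<Rightarrow> (nat \<Rightarrow> nat) set" where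
  "factorization s = insert s (hexacycle s ` ({2..6} - {s 1}))"

lemma self_in_factorization: "s \<in> factorization s"
  by (simp add: factorization_def)

lemma fset_eq_factorization:
  assumes rep: "rep a b c d e"
  shows "fset a b c d e = factorization (sig a b c d e)"
proof -
  have "{2..6} - {a} = {b, c, d, e}"
    using rep unfolding rep_def by auto
  then show ?thesis
    by (simp add: fset_def factorization_def hexacycle_def rep_eval[OF rep])
qed

definition recover :: "(nat \<Rightarrow> nat) \<Rightarrow> nat \<Rightarrow> nat" where
  "recover p = (if p (p 1) = 1 then p
     else sig ((p ^^ 2) 1) (p 1) ((p ^^ 4) 1) ((p ^^ 3) 1) ((p ^^ 5) 1))"

lemma recover_fset:
  assumes rep: "rep a b c d e" and p: "p \<in> fset a b c d e"
  shows "recover p = sig a b c d e"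
proof -
  have rep': "rep a c d e b" "rep a d e b c" using rep_rotate rep by blast+
  have "recover (sig a b c d e) = sig a b c d e"
    "recover (cycle_of_list [1, b, a, d, c, e]) = sig a b c d e"
    "recover (cycle_of_list [1, c, a, e, d, b]) = sig a c d e b"
    "recover (cycle_of_list [1, d, a, b, e, c]) = sig a d e b c"
    "recover (cycle_of_list [1, e, a, c, b, d]) = sig a e b c d"
    by (simp_all add: recover_def rep_eval[OF rep] numeral_eq_Suc)
  then show ?thesis
    using p sig_rotate[OF rep] sig_rotate[OF rep'(1)] sig_rotate[OF rep'(2)]
    unfolding fset_def by auto
qed

lemma recover_factorization: "s \<in> C24_0 \<Longrightarrow> p \<in> factorization s \<Longrightarrow> recover p = s"
  unfolding C24_0_def by (auto simp: fset_eq_factorization[symmetric] recover_fset)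

lemma factorization_disjoint:
  "s \<in> C24_0 \<Longrightarrow> t \<in> C24_0 \<Longrightarrow> s \<noteq> t \<Longrightarrow> factorization s \<inter> factorization t = {}"
  using recover_factorization by blast

lemma inj_on_factorization: "inj_on factorization C24_0"
proof (rule inj_onI)
  fix s t assume "s \<in> C24_0" "t \<in> C24_0" "factorization s = factorization t"
  then have "s \<in> factorization t"
    by (metis self_in_factorization)
  then show "s = t"
    using recover_factorization[OF \<open>t \<in> C24_0\<close>] recover_factorization[OF \<open>s \<in> C24_0\<close> self_in_factorization]
    by simp
qed

lemma fset_subset_C6:
  assumes rep: "rep a b c d e"
  shows "fset a b c d e \<subseteq> insert (sig a b c d e) C6"
proof -
  have "set [1, b, a, d, c, e] = {1..6}" "set [1, c, a, e, d, b] = {1..6}"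
    "set [1, d, a, b, e, c] = {1..6}" "set [1, e, a, c, b, d] = {1..6}"
    unfolding rep_set[OF rep] by auto
  then show ?thesis
    using hexacycles_distinct[OF rep] unfolding fset_def C6_def by blast
qed

lemma C6_in_fset:
  assumes "distinct cs" "set cs = {1..6}"
  obtains a b c d e where "rep a b c d e" "cycle_of_list cs \<in> fset a b c d e"
proof -
  obtain ys where ys: "cycle_of_list cs = cycle_of_list (1 # ys)" "distinct (1 # ys)" "set (1 # ys) = {1..6}"
    using cycle_of_list_rotate_to_head[OF assms(1), of 1] assms(2) by auto
  have "length (1 # ys) = 6"
    using distinct_card[OF ys(2)] ys(3) by simp
  then obtain u2 u3 u4 u5 u6 where u: "ys = [u2, u3, u4, u5, u6]"
    by (auto simp: length_Suc_conv numeral_eq_Suc)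
  have "{u3, u2, u5, u4, u6} = {1..6} - {1}"
    using ys(2,3) unfolding u by auto
  also have "\<dots> = {2..6}" by auto
  finally have "rep u3 u2 u5 u4 u6"
    using ys(2) unfolding u rep_def by auto
  moreover have "cycle_of_list cs \<in> fset u3 u2 u5 u4 u6"
    unfolding ys(1) u fset_def by simp
  ultimately show ?thesis by (rule that)
qed

lemma UN_factorization: "(\<Union>s\<in>C24_0. factorization s) = C24_0 \<union> C6"
proof (intro equalityI subsetI)
  fix p assume "p \<in> (\<Union>s\<in>C24_0. factorization s)"
  then obtain a b c d e where rep: "rep a b c d e" and "p \<in> fset a b c d e"
    unfolding C24_0_def by (auto simp: fset_eq_factorization[symmetric])
  then show "p \<in> C24_0 \<union> C6"
    using fset_subset_C6[OF rep] sig_in_C24_0[OF rep] by blast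
next
  fix p assume "p \<in> C24_0 \<union> C6"
  then consider "p \<in> C24_0" | cs where "distinct cs" "set cs = {1..6}" "p = cycle_of_list cs"
    unfolding C6_def by blast
  then show "p \<in> (\<Union>s\<in>C24_0. factorization s)"
  proof cases
    case 1
    then show ?thesis using self_in_factorization by blast
  next
    case 2
    then obtain a b c d e where rep: "rep a b c d e" and "p \<in> fset a b c d e"
      using C6_in_fset by metis
    then show ?thesis
      using sig_in_C24_0[OF rep] by (auto simp: fset_eq_factorization)
  qed
qed

definition perm_table :: "(nat \<Rightarrow> nat) \<Rightarrow> nat list" where
  "perm_table p = map p [1..<7]"

lemma inj_on_perm_table: "inj_on perm_table {p. p permutes {1..6}}"
proof (rule inj_onI)
  fix p q assume "p \<in> {p. p permutes {1..6}}" "q \<in> {p. p permutes {1..6}}" "perm_table p = perm_table q"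
  then show "p = q"
    unfolding perm_table_def by (intro permutes_eqI[of p "{1..6}" q]) (auto simp: map_eq_conv)
qed

definition sig_of_list :: "nat list \<Rightarrow> nat \<Rightarrow> nat" where
  "sig_of_list xs = sig (xs ! 0) (xs ! 1) (xs ! 2) (xs ! 3) (xs ! 4)"

lemma C24_0_eq_image:
  "C24_0 = sig_of_list ` permutations_of_set {2..6}"
proof (intro equalityI subsetI)
  fix p assume "p \<in> C24_0"
  then obtain a b c d e where "rep a b c d e" "p = sig a b c d e"
    unfolding C24_0_def by blast
  then have "[a, b, c, d, e] \<in> permutations_of_set {2..6}" "p = sig_of_list [a, b, c, d, e]"
    by (simp_all add: rep_def permutations_of_set_def sig_of_list_def)
  then show "p \<in> sig_of_list ` permutations_of_set {2..6}"
    by blast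
next
  fix p assume "p \<in> sig_of_list ` permutations_of_set {2..6}"
  then obtain xs where xs: "xs \<in> permutations_of_set {2..6}" "p = sig_of_list xs"
    by blast
  then have "length xs = 5"
    using distinct_card[of xs] by (simp add: permutations_of_set_def)
  then obtain a b c d e where abcde: "xs = [a, b, c, d, e]"
    by (auto simp: length_Suc_conv numeral_eq_Suc)
  then have "rep a b c d e"
    using xs(1) by (simp add: rep_def permutations_of_set_def)
  then show "p \<in> C24_0"
    unfolding xs(2) abcde by (simp add: sig_of_list_def sig_in_C24_0)
qed

lemma card_C24_0: "card C24_0 = 30"
proof -
  let ?tables = "map (perm_table \<circ> sig_of_list) (permutations_of_set_list [2, 3, 4, 5, 6])"
  have "set [2, 3, 4, 5, 6] = {2..6::nat}" by auto
  then have "permutations_of_set {2..6::nat} = set (permutations_of_set_list [2, 3, 4, 5, 6])"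
    using permutations_of_list[of "[2, 3, 4, 5, 6 :: nat]"] by simp
  then have "perm_table ` C24_0 = set ?tables"
    unfolding C24_0_eq_image by (simp add: image_image)
  moreover have "length (remdups ?tables) = 30"
    by code_simp
  ultimately have "card (perm_table ` C24_0) = 30"
    by (simp add: length_remdups_card_conv)
  moreover have "C24_0 \<subseteq> {p. p permutes {1..6}}"
    unfolding C24_0_def using sig_permutes by blast
  then have "inj_on perm_table C24_0"
    by (rule inj_on_subset[OF inj_on_perm_table])
  ultimately show ?thesis
    by (simp add: card_image)
qed

lemma fset_family_eq: "{fset x2 x3 x4 x5 x6 | x2 x3 x4 x5 x6. rep x2 x3 x4 x5 x6} = factorization ` C24_0"
proof (intro equalityI subsetI)
  fix F assume "F \<in> {fset x2 x3 x4 x5 x6 | x2 x3 x4 x5 x6. rep x2 x3 x4 x5 x6}"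
  then obtain a b c d e where rep: "rep a b c d e" and "F = fset a b c d e"
    by blast
  then have "F = factorization (sig a b c d e)"
    by (simp add: fset_eq_factorization)
  then show "F \<in> factorization ` C24_0"
    using sig_in_C24_0[OF rep] by blast
next
  fix F assume "F \<in> factorization ` C24_0"
  then obtain a b c d e where rep: "rep a b c d e" and "F = factorization (sig a b c d e)"
    unfolding C24_0_def by blast
  then show "F \<in> {fset x2 x3 x4 x5 x6 | x2 x3 x4 x5 x6. rep x2 x3 x4 x5 x6}"
    using fset_eq_factorization[OF rep] by blast
qed

theorem mainTheorem5:
  shows
    "(\<forall>x2 x3 x4 x5 x6 y2 y3 y4 y5 y6.
        rep x2 x3 x4 x5 x6 \<and> rep y2 y3 y4 y5 y6 \<and> sig x2 x3 x4 x5 x6 = sig y2 y3 y4 y5 y6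
        \<longrightarrow> fset x2 x3 x4 x5 x6 = fset y2 y3 y4 y5 y6)
   \<and>
     (\<forall>x2 x3 x4 x5 x6. rep x2 x3 x4 x5 x6 \<longrightarrow>
        card (fset x2 x3 x4 x5 x6) = 5 \<and>
        (\<forall>i\<in>{1..6::nat}. \<forall>j\<in>{1..6::nat}.
           card {p \<in> fset x2 x3 x4 x5 x6. p i = j} = (if i = j then 0 else 1)))
   \<and>
     (\<forall>x2 x3 x4 x5 x6 y2 y3 y4 y5 y6.
        rep x2 x3 x4 x5 x6 \<and> rep y2 y3 y4 y5 y6 \<and> sig x2 x3 x4 x5 x6 \<noteq> sig y2 y3 y4 y5 y6
        \<longrightarrow> fset x2 x3 x4 x5 x6 \<inter> fset y2 y3 y4 y5 y6 = {})
   \<and>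
     \<Union> {fset x2 x3 x4 x5 x6 | x2 x3 x4 x5 x6. rep x2 x3 x4 x5 x6} = C24_0 \<union> C6
   \<and>
     card {fset x2 x3 x4 x5 x6 | x2 x3 x4 x5 x6. rep x2 x3 x4 x5 x6} = 30"
proof (intro conjI allI impI ballI; (elim conjE)?)
  fix x2 x3 x4 x5 x6 y2 y3 y4 y5 y6
  assume "rep x2 x3 x4 x5 x6" "rep y2 y3 y4 y5 y6"
  then show "sig x2 x3 x4 x5 x6 = sig y2 y3 y4 y5 y6 \<Longrightarrow> fset x2 x3 x4 x5 x6 = fset y2 y3 y4 y5 y6"
    and "sig x2 x3 x4 x5 x6 \<noteq> sig y2 y3 y4 y5 y6 \<Longrightarrow> fset x2 x3 x4 x5 x6 \<inter> fset y2 y3 y4 y5 y6 = {}"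
    by (simp_all add: fset_eq_factorization factorization_disjoint sig_in_C24_0)
next
  fix x2 x3 x4 x5 x6 i j :: nat
  assume "rep x2 x3 x4 x5 x6"
  then show "card (fset x2 x3 x4 x5 x6) = 5"
    and "i \<in> {1..6} \<Longrightarrow> j \<in> {1..6} \<Longrightarrow> card {p \<in> fset x2 x3 x4 x5 x6. p i = j} = (if i = j then 0 else 1)"
    by (simp_all add: card_fset card_fset_apply_eq)
next
  show "\<Union> {fset x2 x3 x4 x5 x6 | x2 x3 x4 x5 x6. rep x2 x3 x4 x5 x6} = C24_0 \<union> C6"
    by (simp add: fset_family_eq UN_factorization)
  show "card {fset x2 x3 x4 x5 x6 | x2 x3 x4 x5 x6. rep x2 x3 x4 x5 x6} = 30"
    by (simp add: fset_family_eq card_image inj_on_factorization card_C24_0)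
qed

end
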